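(* (a) Let $x,y\in\mathbb H(\mathbb Q)\setminus\mathbb Q$ be rational quaternions, neither of which is a rational scalar, and suppose the real part $y_0$ of $y$ is nonzero. Then $yxy^{-1}$ commutes with $x$ if and only if $y$ commutes with $x$. (b) Let $p,l$ be distinct odd primes and let $\Gamma=\psi(\tilde\Gamma)$ be the group described in the context. For $a,b\in\Gamma$, the element $bab^{-1}$ commutes with $a$ if and only if $b$ commutes with $a$.
   Context: $\mathbb H(\mathbb Q)$ denotes the rational quaternions $x=x_0+x_1i+x_2j+x_3k$, $x_i\in\mathbb Q$, with $i^2=j^2=k^2=-1$, $ij=-ji=k$; $\mathbb Q\subset\mathbb H(\mathbb Q)$ is the set of quaternions with $x_1=x_2=x_3=0$; $x_0$ is the real part. $\mathbb H(\mathbb Z)\subset\mathbb H(\mathbb Q)$ denotes those with integer coordinates, and $|x|^2=x_0^2+x_1^2+x_2^2+x_3^2$. Let $p,l$ be distinct odd primes. Fix $c_p,d_p\in\mathbb Q_p$ with $c_p^2+d_p^2+1=0$ and $c_l,d_l\in\mathbb Q_l$ with $c_l^2+d_l^2+1=0$. Define $\psi:\mathbb H(\mathbb Z)\setminus\{0\}\to G:=PGL_2(\mathbb Q_p)\times PGL_2(\mathbb Q_l)$ by sending $x$ to the class of the pair $\left(\begin{pmatrix} x_0+x_1c_p+x_3d_p & -x_1d_p+x_2+x_3c_p\\ -x_1d_p-x_2+x_3c_p & x_0-x_1c_p-x_3d_p\end{pmatrix},\begin{pmatrix} x_0+x_1c_l+x_3d_l & -x_1d_l+x_2+x_3c_l\\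 -x_1d_l-x_2+x_3c_l & x_0-x_1c_l-x_3d_l\end{pmatrix}\right)$. Let $\tilde\Gamma$ be the set of $x\in\mathbb H(\mathbb Z)$ such that $|x|^2=p^rl^s$ for some integers $r,s\ge 0$, and such that $x_0$ is odd and $x_1,x_2,x_3$ are even if $|x|^2\equiv 1\pmod 4$, while $x_1$ is even and $x_0,x_2,x_3$ are odd if $|x|^2\equiv 3\pmod 4$. Then $\Gamma=\psi(\tilde\Gamma)$ is a torsion-free cocompact lattice in $G$. *)

theory Defs
  imports "HOL-Analysis.Analysis" "HOL-Computational_Algebra.Primes"
begin

text \<open>The quaternion x0 + x1 i + x2 j + x3 k with coefficients in a ring;
  H(Q) is  rat quat  and H(Z) is  int quat.\<close>
datatype 'a quat = Quat (q0: 'a) (q1: 'a) (q2: 'a) (q3: 'a)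

text \<open>Hamilton product, i^2 = j^2 = k^2 = -1, ij = -ji = k.\<close>
definition qmult :: "'a::comm_ring_1 quat \<Rightarrow> 'a quat \<Rightarrow> 'a quat" (infixl \<open>\<star>\<close> 70) where
  "qmult x y = Quat
     (q0 x * q0 y - q1 x * q1 y - q2 x * q2 y - q3 x * q3 y)
     (q0 x * q1 y + q1 x * q0 y + q2 x * q3 y - q3 x * q2 y)
     (q0 x * q2 y - q1 x * q3 y + q2 x * q0 y + q3 x * q1 y)
     (q0 x * q3 y + q1 x * q2 y - q2 x * q1 y + q3 x * q0 y)"

definition qnorm2 :: "'a::comm_ring_1 quat \<Rightarrow> 'a" where
  "qnorm2 x = (q0 x)^2 + (q1 x)^2 + (q2 x)^2 + (q3 x)^2"

definition qinv :: "'a::field quat \<Rightarrow> 'a quat" where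
  "qinv x = (let n = qnorm2 x in
     Quat (q0 x / n) (- q1 x / n) (- q2 x / n) (- q3 x / n))"

definition is_scalar :: "'a::zero quat \<Rightarrow> bool" where
  "is_scalar x \<longleftrightarrow> q1 x = 0 \<and> q2 x = 0 \<and> q3 x = 0"

definition Gamma_tilde :: "nat \<Rightarrow> nat \<Rightarrow> int quat set" where
  "Gamma_tilde p l = {x.
     (\<exists>r s::nat. qnorm2 x = int p ^ r * int l ^ s) \<and>
     (qnorm2 x mod 4 = 1 \<longrightarrow> odd (q0 x) \<and> even (q1 x) \<and> even (q2 x) \<and> even (q3 x)) \<and>
     (qnorm2 x mod 4 = 3 \<longrightarrow> even (q1 x) \<and> odd (q0 x) \<and> odd (q2 x) \<and> odd (q3 x))}"

text \<open>The matrix attached to an integral quaternion x and a pair (c,d) with c^2+d^2+1=0.\<close>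
definition psi_mat :: "'a::field \<Rightarrow> 'a \<Rightarrow> int quat \<Rightarrow> 'a^2^2" where
  "psi_mat c d x = (let x0 = of_int (q0 x); x1 = of_int (q1 x);
                         x2 = of_int (q2 x); x3 = of_int (q3 x) in
     vector [vector [x0 + x1 * c + x3 * d, - x1 * d + x2 + x3 * c],
             vector [- x1 * d - x2 + x3 * c, x0 - x1 * c - x3 * d]])"

text \<open>Elements of G = PGL_2(K_p) x PGL_2(K_l) are represented by pairs of invertible
  matrices; two representatives give the same element of G iff each component agrees
  up to a nonzero scalar.\<close>
definition pgl_eq :: "'a::field^2^2 \<Rightarrow> 'a^2^2 \<Rightarrow> bool" where
  "pgl_eq A B \<longleftrightarrow> (\<exists>\<mu>. \<mu> \<noteq> 0 \<and> A = mat \<mu> ** B)"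

definition G_eq :: "('a::field^2^2) \<times> ('b::field^2^2) \<Rightarrow> ('a^2^2) \<times> ('b^2^2) \<Rightarrow> bool" where
  "G_eq a b \<longleftrightarrow> pgl_eq (fst a) (fst b) \<and> pgl_eq (snd a) (snd b)"

definition G_mult :: "('a::field^2^2) \<times> ('b::field^2^2) \<Rightarrow> ('a^2^2) \<times> ('b^2^2) \<Rightarrow> ('a^2^2) \<times> ('b^2^2)" where
  "G_mult a b = (fst a ** fst b, snd a ** snd b)"

definition G_inv :: "('a::field^2^2) \<times> ('b::field^2^2) \<Rightarrow> ('a^2^2) \<times> ('b^2^2)" where
  "G_inv a = (matrix_inv (fst a), matrix_inv (snd a))"

definition G_commute :: "('a::field^2^2) \<times> ('b::field^2^2) \<Rightarrow> ('a^2^2) \<times> ('b^2^2) \<Rightarrow> bool" where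
  "G_commute a b \<longleftrightarrow> G_eq (G_mult a b) (G_mult b a)"

definition psi :: "'a::field \<Rightarrow> 'a \<Rightarrow> 'b::field \<Rightarrow> 'b \<Rightarrow> int quat \<Rightarrow> ('a^2^2) \<times> ('b^2^2)" where
  "psi cp dp cl dl x = (psi_mat cp dp x, psi_mat cl dl x)"

end

theory Submission
  imports Defs
begin

text \<open>Two quaternions commute iff their vector parts are parallel. For y = s + w and
  x = a + e, the vector part of y x conj(y) is (s^2 - |w|^2) e + 2 (w \<cdot> e) w + 2 s (w \<times> e),
  so y x y^-1 commutes with x iff (w \<cdot> e) (w \<times> e) + s ((w \<times> e) \<times> e) = 0; over an
  ordered ring and for s \<noteq> 0 this forces w \<times> e = 0.

  For part (b), since c^2 + d^2 = -1 the matrices of psi represent the integral quaternions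
  faithfully and multiplicatively over any field of characteristic 0. Commuting in PGL_2 then
  means u x = m x u for a scalar m; taking norms gives m = 1 or m = -1, and m = -1 is impossible
  when u has nonzero real part. Elements of Gamma-tilde have odd norm, hence odd real part, so
  the question reduces to part (a) for integral quaternions, with y^-1 replaced by conj(y).\<close>

lemma quat_eq_iff: "x = y \<longleftrightarrow> q0 x = q0 y \<and> q1 x = q1 y \<and> q2 x = q2 y \<and> q3 x = q3 y"
  by (cases x; cases y) auto

definition qconj :: "'a::comm_ring_1 quat \<Rightarrow> 'a quat" where
  "qconj x = Quat (q0 x) (- q1 x) (- q2 x) (- q3 x)"

definition qscale :: "'a::comm_ring_1 \<Rightarrow> 'a quat \<Rightarrow> 'a quat" where
  "qscale k x = Quat (k * q0 x) (k * q1 x) (k * q2 x) (k * q3 x)"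

definition qcross :: "'a::comm_ring_1 quat \<Rightarrow> 'a quat \<Rightarrow> 'a quat" where
  "qcross x y =
     Quat 0 (q2 x * q3 y - q3 x * q2 y) (q3 x * q1 y - q1 x * q3 y) (q1 x * q2 y - q2 x * q1 y)"

lemma qscale_1 [simp]: "qscale 1 x = x"
  unfolding quat_eq_iff qscale_def by simp

lemma qscale_qmult_left: "qscale k x \<star> y = qscale k (x \<star> y)"
  unfolding quat_eq_iff qmult_def qscale_def by (simp add: algebra_simps)

lemma qscale_qmult_right: "x \<star> qscale k y = qscale k (x \<star> y)"
  unfolding quat_eq_iff qmult_def qscale_def by (simp add: algebra_simps)

lemma qscale_cancel: "(k::'a::idom) \<noteq> 0 \<Longrightarrow> qscale k x = qscale k y \<longleftrightarrow> x = y"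
  unfolding quat_eq_iff qscale_def by simp

lemma qnorm2_qscale: "qnorm2 (qscale k x) = k^2 * qnorm2 x"
  unfolding qnorm2_def qscale_def by (simp add: algebra_simps power2_eq_square)

lemma qnorm2_qmult: "qnorm2 (x \<star> y) = qnorm2 x * qnorm2 y"
  unfolding qnorm2_def qmult_def by (simp add: algebra_simps power2_eq_square)

lemma qnorm2_pos: "q0 (x::'a::linordered_idom quat) \<noteq> 0 \<Longrightarrow> qnorm2 x > 0"
  unfolding qnorm2_def by (simp add: add_pos_nonneg)

lemma qinv_eq_qsc_qconj: "qinv x = qscale (1 / qnorm2 x) (qconj x)"
  unfolding quat_eq_iff qinv_def qscale_def qconj_def Let_def by simp

lemma qmult_qconj_right: "x \<star> qconj x = Quat (qnorm2 x) 0 0 0"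
  unfolding quat_eq_iff qmult_def qconj_def qnorm2_def by (simp add: algebra_simps power2_eq_square)

lemma qmult_qconj_left: "qconj x \<star> x = Quat (qnorm2 x) 0 0 0"
  unfolding quat_eq_iff qmult_def qconj_def qnorm2_def by (simp add: algebra_simps power2_eq_square)

lemma qmult_qinv_right: "qnorm2 (x::'a::field quat) \<noteq> 0 \<Longrightarrow> x \<star> qinv x = Quat 1 0 0 0"
  unfolding qinv_eq_qsc_qconj qscale_qmult_right qmult_qconj_right by (simp add: qscale_def)

lemma qmult_qinv_left: "qnorm2 (x::'a::field quat) \<noteq> 0 \<Longrightarrow> qinv x \<star> x = Quat 1 0 0 0"
  unfolding qinv_eq_qsc_qconj qscale_qmult_left qmult_qconj_left by (simp add: qscale_def)

lemma qmult_commute_iff_qcross: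
  fixes x y :: "'a::{idom, ring_char_0} quat"
  shows "x \<star> y = y \<star> x \<longleftrightarrow> qcross x y = Quat 0 0 0 0"
  unfolding quat_eq_iff qmult_def qcross_def by (auto simp: algebra_simps)

lemma qscale_commute_iff:
  fixes k :: "'a::idom"
  assumes "k \<noteq> 0"
  shows "qscale k x \<star> y = y \<star> qscale k x \<longleftrightarrow> x \<star> y = y \<star> x"
  by (simp add: qscale_qmult_left qscale_qmult_right qscale_cancel assms)

lemma q0_conjugation: "q0 (y \<star> x \<star> qconj y) = q0 x * qnorm2 y"
  unfolding qmult_def qconj_def qnorm2_def by (simp add: algebra_simps power2_eq_square)

text \<open>Dotting the hypothesis with u = w \<times> e kills u \<times> e and leaves (w \<cdot> e) |u|^2 = 0.
  If w \<cdot> e = 0, the expansion (w \<times> e) \<times> e = (w \<cdot> e) e - |e|^2 w turns the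
  hypothesis into s |e|^2 w = 0.\<close>
lemma cross_product_vanishes:
  fixes s w1 w2 w3 e1 e2 e3 :: "'a::linordered_idom"
  defines "u1 \<equiv> w2 * e3 - w3 * e2" and "u2 \<equiv> w3 * e1 - w1 * e3" and "u3 \<equiv> w1 * e2 - w2 * e1"
    and "d \<equiv> w1 * e1 + w2 * e2 + w3 * e3"
  assumes "s \<noteq> 0"
    and E1: "d * u1 + s * (u2 * e3 - u3 * e2) = 0"
    and E2: "d * u2 + s * (u3 * e1 - u1 * e3) = 0"
    and E3: "d * u3 + s * (u1 * e2 - u2 * e1) = 0"
  shows "u1 = 0 \<and> u2 = 0 \<and> u3 = 0"
proof (cases "d = 0")
  case False
  have "d * (u1 * u1 + u2 * u2 + u3 * u3) =
      u1 * (d * u1 + s * (u2 * e3 - u3 * e2)) + u2 * (d * u2 + s * (u3 * e1 - u1 * e3))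
      + u3 * (d * u3 + s * (u1 * e2 - u2 * e1))"
    by (simp add: algebra_simps)
  with E1 E2 E3 False have "u1 * u1 + u2 * u2 + u3 * u3 = 0" by simp
  then show ?thesis by (simp add: add_nonneg_eq_0_iff)
next
  case True
  define n where "n = e1 * e1 + e2 * e2 + e3 * e3"
  have "u2 * e3 - u3 * e2 = d * e1 - n * w1" "u3 * e1 - u1 * e3 = d * e2 - n * w2"
    "u1 * e2 - u2 * e1 = d * e3 - n * w3"
    unfolding u1_def u2_def u3_def d_def n_def by (simp_all add: algebra_simps)
  with E1 E2 E3 True \<open>s \<noteq> 0\<close> have "n * w1 = 0" "n * w2 = 0" "n * w3 = 0" by simp_all
  moreover have "n = 0 \<Longrightarrow> e1 = 0 \<and> e2 = 0 \<and> e3 = 0"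
    unfolding n_def by (simp add: add_nonneg_eq_0_iff)
  ultimately show ?thesis unfolding u1_def u2_def u3_def by auto
qed

lemma conjugate_commute_iff:
  fixes x y :: "'a::linordered_idom quat"
  assumes "q0 y \<noteq> 0"
  shows "(y \<star> x \<star> qconj y) \<star> x = x \<star> (y \<star> x \<star> qconj y) \<longleftrightarrow> y \<star> x = x \<star> y"
proof -
  obtain s w1 w2 w3 where y: "y = Quat s w1 w2 w3" by (cases y)
  obtain a e1 e2 e3 where x: "x = Quat a e1 e2 e3" by (cases x)
  have s: "s \<noteq> 0" using assms y by simp
  define u1 u2 u3 d where "u1 = w2 * e3 - w3 * e2" and "u2 = w3 * e1 - w1 * e3"
    and "u3 = w1 * e2 - w2 * e1" and "d = w1 * e1 + w2 * e2 + w3 * e3"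
  define v1 v2 v3 where "v1 = d * u1 + s * (u2 * e3 - u3 * e2)"
    and "v2 = d * u2 + s * (u3 * e1 - u1 * e3)" and "v3 = d * u3 + s * (u1 * e2 - u2 * e1)"
  have "qcross (y \<star> x \<star> qconj y) x = Quat 0 (2 * v1) (2 * v2) (2 * v3)"
    unfolding y x u1_def u2_def u3_def d_def v1_def v2_def v3_def quat_eq_iff qcross_def
      qmult_def qconj_def
    by (simp add: algebra_simps)
  then have "(y \<star> x \<star> qconj y) \<star> x = x \<star> (y \<star> x \<star> qconj y) \<longleftrightarrow> v1 = 0 \<and> v2 = 0 \<and> v3 = 0"
    by (simp add: qmult_commute_iff_qcross)
  also have "\<dots> \<longleftrightarrow> u1 = 0 \<and> u2 = 0 \<and> u3 = 0"
    using cross_product_vanishes[OF s, of w1 e1 w2 e2 w3 e3]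
    unfolding u1_def u2_def u3_def d_def v1_def v2_def v3_def by auto
  also have "\<dots> \<longleftrightarrow> y \<star> x = x \<star> y"
    unfolding qmult_commute_iff_qcross y x u1_def u2_def u3_def qcross_def by auto
  finally show ?thesis .
qed

lemma conjugate_qinv_commute_iff:
  fixes x y :: "'a::linordered_field quat"
  assumes "q0 y \<noteq> 0"
  shows "(y \<star> x \<star> qinv y) \<star> x = x \<star> (y \<star> x \<star> qinv y) \<longleftrightarrow> y \<star> x = x \<star> y"
proof -
  have "1 / qnorm2 y \<noteq> 0" using qnorm2_pos[OF assms] by simp
  then show ?thesis
    by (simp add: qinv_eq_qsc_qconj qscale_qmult_left qscale_qmult_right qscale_cancel
        conjugate_commute_iff[OF assms])
qed

definition quat_matrix :: "'a::field \<Rightarrow> 'a \<Rightarrow> 'a quat \<Rightarrow> 'a^2^2" where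
  "quat_matrix c d x =
     vector [vector [q0 x + q1 x * c + q3 x * d, - q1 x * d + q2 x + q3 x * c],
             vector [- q1 x * d - q2 x + q3 x * c, q0 x - q1 x * c - q3 x * d]]"

lemma psi_mat_eq_quat_matrix: "psi_mat c d x = quat_matrix c d (map_quat of_int x)"
  unfolding psi_mat_def quat_matrix_def Let_def quat.map_sel ..

lemma mat2_eq_iff:
  "(A::'a^2^2) = B \<longleftrightarrow> A$1$1 = B$1$1 \<and> A$1$2 = B$1$2 \<and> A$2$1 = B$2$1 \<and> A$2$2 = B$2$2"
  by (auto simp: vec_eq_iff forall_2)

lemma quat_matrix_qmult:
  fixes c d :: "'a::field"
  assumes "c^2 + d^2 + 1 = 0"
  shows "quat_matrix c d (x \<star> y) = quat_matrix c d x ** quat_matrix c d y"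
  unfolding mat2_eq_iff quat_matrix_def qmult_def
  by (simp add: matrix_matrix_mult_def sum_2) (use assms in algebra)+

lemma quat_matrix_one: "quat_matrix c d (Quat 1 0 0 0) = mat 1"
  unfolding mat2_eq_iff quat_matrix_def by (simp add: mat_def)

lemma quat_matrix_qscale: "quat_matrix c d (qscale k x) = mat k ** quat_matrix c d x"
  unfolding mat2_eq_iff quat_matrix_def qscale_def
  by (simp add: matrix_matrix_mult_def sum_2 mat_def algebra_simps)

lemma quat_matrix_inj:
  fixes c d :: "'a::field_char_0"
  assumes "c^2 + d^2 + 1 = 0" and "quat_matrix c d x = quat_matrix c d y"
  shows "x = y"
proof -
  define f0 f1 f2 f3 where "f0 = q0 x - q0 y" and "f1 = q1 x - q1 y"
    and "f2 = q2 x - q2 y" and "f3 = q3 x - q3 y"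
  from assms(2) have E: "f0 + f1 * c + f3 * d = 0" "- f1 * d + f2 + f3 * c = 0"
     "- f1 * d - f2 + f3 * c = 0" "f0 - f1 * c - f3 * d = 0"
    unfolding mat2_eq_iff quat_matrix_def f0_def f1_def f2_def f3_def
    by (simp_all add: algebra_simps)
  then have "f0 = 0" "f2 = 0" "f1 = 0" "f3 = 0"
    using assms(1) by algebra+
  then show ?thesis
    unfolding quat_eq_iff f0_def f1_def f2_def f3_def by simp
qed

lemma matrix_inv_unique:
  fixes A B :: "'a::comm_semiring_1^'n^'n"
  assumes "A ** B = mat 1" and "B ** A = mat 1"
  shows "matrix_inv A = B"
proof -
  have inv: "A ** matrix_inv A = mat 1 \<and> matrix_inv A ** A = mat 1"
    unfolding matrix_inv_def by (rule someI[of _ B]) (use assms in blast)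
  have "matrix_inv A = matrix_inv A ** (A ** B)" using assms by simp
  also have "\<dots> = B" using inv by (simp add: matrix_mul_assoc)
  finally show ?thesis .
qed

lemma matrix_inv_quat_matrix:
  fixes c d :: "'a::field"
  assumes "c^2 + d^2 + 1 = 0" and "qnorm2 x \<noteq> 0"
  shows "matrix_inv (quat_matrix c d x) = quat_matrix c d (qinv x)"
  by (rule matrix_inv_unique)
    (simp_all add: quat_matrix_qmult[OF assms(1), symmetric] qmult_qinv_right qmult_qinv_left
      assms(2) quat_matrix_one)

lemma qmult_commute_of_eq_qscale:
  fixes x y :: "'a::field_char_0 quat"
  assumes "q0 x \<noteq> 0" and "qnorm2 x \<noteq> 0" and "qnorm2 y \<noteq> 0"
    and eq: "x \<star> y = qscale m (y \<star> x)"
  shows "x \<star> y = y \<star> x"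
proof -
  have "qnorm2 x * qnorm2 y = m^2 * (qnorm2 x * qnorm2 y)"
    using arg_cong[OF eq, of qnorm2] by (simp add: qnorm2_qmult qnorm2_qscale mult.commute)
  then have "m = 1 \<or> m = -1"
    using assms(2,3) by (simp add: power2_eq_1_iff)
  moreover have "m \<noteq> -1"
  proof
    assume "m = -1"
    obtain a v1 v2 v3 where x: "x = Quat a v1 v2 v3" by (cases x)
    obtain b w1 w2 w3 where y: "y = Quat b w1 w2 w3" by (cases y)
    from eq \<open>m = -1\<close> have "q0 (x \<star> y) + q0 (y \<star> x) = 0" "q1 (x \<star> y) + q1 (y \<star> x) = 0"
      "q2 (x \<star> y) + q2 (y \<star> x) = 0" "q3 (x \<star> y) + q3 (y \<star> x) = 0"
      by (simp_all add: qscale_def)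
    \<comment> \<open>x y + y x = 0 says a b = v \<cdot> w and b v = - a w, so a |y|^2 = (b v + a w) \<cdot> w = 0\<close>
    then have "2 * (a * qnorm2 y) = 0"
      unfolding x y qmult_def qnorm2_def quat.sel by algebra
    with assms(1,3) x show False by simp
  qed
  ultimately show ?thesis using eq by simp
qed

lemma pgl_eq_quat_matrix_commute_iff:
  fixes c d :: "'a::field_char_0"
  assumes cd: "c^2 + d^2 + 1 = 0"
    and "q0 x \<noteq> 0" and "qnorm2 x \<noteq> 0" and "qnorm2 y \<noteq> 0"
  shows "pgl_eq (quat_matrix c d x ** quat_matrix c d y) (quat_matrix c d y ** quat_matrix c d x)
    \<longleftrightarrow> x \<star> y = y \<star> x"
proof
  assume "pgl_eq (quat_matrix c d x ** quat_matrix c d y) (quat_matrix c d y ** quat_matrix c d x)"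
  then obtain m where "quat_matrix c d (x \<star> y) = quat_matrix c d (qscale m (y \<star> x))"
    unfolding pgl_eq_def quat_matrix_qscale quat_matrix_qmult[OF cd] by blast
  then have "x \<star> y = qscale m (y \<star> x)"
    by (rule quat_matrix_inj[OF cd])
  then show "x \<star> y = y \<star> x"
    using qmult_commute_of_eq_qscale assms(2-4) by blast
next
  assume "x \<star> y = y \<star> x"
  then show "pgl_eq (quat_matrix c d x ** quat_matrix c d y) (quat_matrix c d y ** quat_matrix c d x)"
    unfolding pgl_eq_def quat_matrix_qmult[OF cd, symmetric] by (intro exI[of _ 1]) simp
qed

lemma map_quat_of_int_qmult:
  "map_quat of_int (x \<star> y) = map_quat of_int x \<star> map_quat of_int y"
  unfolding quat_eq_iff qmult_def quat.map_sel by simp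

lemma map_quat_of_int_qconj: "map_quat of_int (qconj x) = qconj (map_quat of_int x)"
  unfolding quat_eq_iff qconj_def quat.map_sel by simp

lemma qnorm2_map_quat_of_int: "qnorm2 (map_quat of_int x) = of_int (qnorm2 x)"
  unfolding qnorm2_def quat.map_sel by simp

lemma map_quat_of_int_commute_iff:
  "map_quat (of_int :: int \<Rightarrow> 'a::{comm_ring_1, ring_char_0}) x \<star> map_quat of_int y =
     map_quat of_int y \<star> map_quat of_int x \<longleftrightarrow> x \<star> y = y \<star> x"
  unfolding map_quat_of_int_qmult[symmetric] quat_eq_iff quat.map_sel by simp

lemma pgl_eq_commute_iff:
  fixes c d :: "'a::field_char_0" and x y :: "int quat"
  assumes cd: "c^2 + d^2 + 1 = 0" and "q0 x \<noteq> 0" and "q0 y \<noteq> 0"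
  defines "M z \<equiv> quat_matrix c d (map_quat of_int z)"
  shows "pgl_eq (M x ** M y) (M y ** M x) \<longleftrightarrow> x \<star> y = y \<star> x"
  unfolding M_def
  using pgl_eq_quat_matrix_commute_iff[OF cd, of "map_quat of_int x" "map_quat of_int y"]
    qnorm2_pos[of x] qnorm2_pos[of y] assms(2,3)
  by (simp add: qnorm2_map_quat_of_int map_quat_of_int_commute_iff quat.map_sel)

lemma pgl_eq_conjugate_commute_iff:
  fixes c d :: "'a::field_char_0" and x y :: "int quat"
  assumes cd: "c^2 + d^2 + 1 = 0" and "q0 x \<noteq> 0" and "q0 y \<noteq> 0"
  defines "M z \<equiv> quat_matrix c d (map_quat of_int z)"
  shows "pgl_eq ((M y ** M x ** matrix_inv (M y)) ** M x) (M x ** (M y ** M x ** matrix_inv (M y)))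
    \<longleftrightarrow> y \<star> x = x \<star> y"
proof -
  define z where "z = y \<star> x \<star> qconj y"
  define X Y Z where "X = map_quat (of_int :: int \<Rightarrow> 'a) x"
    and "Y = map_quat (of_int :: int \<Rightarrow> 'a) y" and "Z = map_quat (of_int :: int \<Rightarrow> 'a) z"
  define k where "k = 1 / qnorm2 Y"
  have "q0 z \<noteq> 0"
    using assms(2) qnorm2_pos[OF assms(3)] by (simp add: z_def q0_conjugation)
  then have "qnorm2 x > 0" "qnorm2 y > 0" "qnorm2 z > 0"
    using assms(2,3) by (simp_all add: qnorm2_pos)
  then have nonzero: "k \<noteq> 0" "qnorm2 (qscale k Z) \<noteq> 0" "qnorm2 X \<noteq> 0"
    by (simp_all add: k_def X_def Y_def Z_def qnorm2_qscale qnorm2_map_quat_of_int)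
  have "q0 (qscale k Z) \<noteq> 0"
    using \<open>q0 z \<noteq> 0\<close> nonzero(1) by (simp add: Z_def qscale_def quat.map_sel)
  have "M y ** M x ** matrix_inv (M y) =
      quat_matrix c d Y ** quat_matrix c d X ** quat_matrix c d (qinv Y)"
    unfolding M_def X_def[symmetric] Y_def[symmetric] using nonzero(1)
    by (simp add: matrix_inv_quat_matrix[OF cd] k_def)
  also have "Y \<star> X \<star> qinv Y = qscale k Z"
    unfolding X_def Y_def Z_def z_def k_def qinv_eq_qsc_qconj qscale_qmult_right
      map_quat_of_int_qmult map_quat_of_int_qconj ..
  then have "quat_matrix c d Y ** quat_matrix c d X ** quat_matrix c d (qinv Y) =
      quat_matrix c d (qscale k Z)"
    unfolding quat_matrix_qmult[OF cd, symmetric] by simp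
  finally have "M y ** M x ** matrix_inv (M y) = quat_matrix c d (qscale k Z)" .
  then have "pgl_eq ((M y ** M x ** matrix_inv (M y)) ** M x) (M x ** (M y ** M x ** matrix_inv (M y)))
      \<longleftrightarrow> qscale k Z \<star> X = X \<star> qscale k Z"
    unfolding M_def X_def[symmetric]
    using pgl_eq_quat_matrix_commute_iff[OF cd \<open>q0 (qscale k Z) \<noteq> 0\<close> nonzero(2,3)] by simp
  also have "\<dots> \<longleftrightarrow> z \<star> x = x \<star> z"
    unfolding qscale_commute_iff[OF nonzero(1)] X_def Z_def map_quat_of_int_commute_iff ..
  also have "\<dots> \<longleftrightarrow> y \<star> x = x \<star> y"
    unfolding z_def by (rule conjugate_commute_iff[OF assms(3)])
  finally show ?thesis .
qed

lemma Gamma_tilde_q0_nonzero: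
  assumes "x \<in> Gamma_tilde p l" and "odd p" and "odd l"
  shows "q0 x \<noteq> 0"
proof -
  obtain r s where norm: "qnorm2 x = int p ^ r * int l ^ s"
    and "qnorm2 x mod 4 = 1 \<longrightarrow> odd (q0 x)" and "qnorm2 x mod 4 = 3 \<longrightarrow> odd (q0 x)"
    using assms(1) unfolding Gamma_tilde_def by blast
  moreover have "odd (qnorm2 x)"
    unfolding norm using assms(2,3) by simp
  then have "qnorm2 x mod 4 = 1 \<or> qnorm2 x mod 4 = 3" by presburger
  ultimately have "odd (q0 x)" by blast
  then show ?thesis by auto
qed

theorem lemma2p5:
  shows "(\<forall>x y :: rat quat. \<not> is_scalar x \<and> \<not> is_scalar y \<and> q0 y \<noteq> 0 \<longrightarrow>
            ((y \<star> x \<star> qinv y) \<star> x = x \<star> (y \<star> x \<star> qinv y) \<longleftrightarrow> y \<star> x = x \<star> y))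
       \<and> (\<forall>(p::nat) (l::nat) (cp::'a::field_char_0) dp (cl::'b::field_char_0) dl.
            prime p \<and> prime l \<and> odd p \<and> odd l \<and> p \<noteq> l \<and>
            cp^2 + dp^2 + 1 = 0 \<and> cl^2 + dl^2 + 1 = 0 \<longrightarrow>
            (\<forall>a\<in>psi cp dp cl dl ` Gamma_tilde p l. \<forall>b\<in>psi cp dp cl dl ` Gamma_tilde p l.
               G_commute (G_mult (G_mult b a) (G_inv b)) a \<longleftrightarrow> G_commute b a))"
proof (intro conjI allI impI ballI)
  fix x y :: "rat quat"
  assume "\<not> is_scalar x \<and> \<not> is_scalar y \<and> q0 y \<noteq> 0"
  then show "(y \<star> x \<star> qinv y) \<star> x = x \<star> (y \<star> x \<star> qinv y) \<longleftrightarrow> y \<star> x = x \<star> y"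
    using conjugate_qinv_commute_iff by blast
next
  fix p l :: nat and cp dp :: 'a and cl dl :: 'b and a b
  assume "prime p \<and> prime l \<and> odd p \<and> odd l \<and> p \<noteq> l \<and>
    cp^2 + dp^2 + 1 = 0 \<and> cl^2 + dl^2 + 1 = 0"
  then have odd: "odd p" "odd l" and cdp: "cp^2 + dp^2 + 1 = 0" and cdl: "cl^2 + dl^2 + 1 = 0"
    by auto
  assume "a \<in> psi cp dp cl dl ` Gamma_tilde p l" and "b \<in> psi cp dp cl dl ` Gamma_tilde p l"
  then obtain x y where "x \<in> Gamma_tilde p l" "y \<in> Gamma_tilde p l"
    and ab: "a = psi cp dp cl dl x" "b = psi cp dp cl dl y"
    by blast
  then have "q0 x \<noteq> 0" "q0 y \<noteq> 0"
    using Gamma_tilde_q0_nonzero odd by blast+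
  then show "G_commute (G_mult (G_mult b a) (G_inv b)) a \<longleftrightarrow> G_commute b a"
    unfolding ab G_commute_def G_eq_def G_mult_def G_inv_def psi_def psi_mat_eq_quat_matrix
    by (simp add: pgl_eq_conjugate_commute_iff[OF cdp] pgl_eq_conjugate_commute_iff[OF cdl]
        pgl_eq_commute_iff[OF cdp] pgl_eq_commute_iff[OF cdl])
qed

end
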